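(* Let $\delta\le\frac14$ and let $\mathcal{I}$ be a $\delta$-ONI instance with $n$ agents and $|N^1_1|\le n\left(\frac14-\delta\right)/\left(\frac14+\frac\delta3\right)$. Then every agent $i\in N^1_1$ receives a bag of value at least $\left(\frac34+\delta\right)\mathrm{MMS}_i$ at the end of Algorithm $\mathtt{approxMMS1}(\mathcal{I},\delta)$.
   Context: Instance: agents $[n]$, goods $[m]$, additive valuations; goods with index larger than $m$ are dummy goods of value 0; $\mathrm{MMS}_i$ is the max over partitions of the goods into $n$ bundles of the minimum bundle value for $i$. Ordered: $v_i(1)\ge\dots\ge v_i(m)$ for all $i$. Normalized: every agent $i$ has an MMS partition with all $n$ bundles of value exactly 1 to $i$. $\alpha$-irreducible: for every $i$, $v_i(1)<\alpha$, $v_i(\{2n-1,2n,2n+1\})<\alpha$, $v_i(\{3n-2,\dots,3n+1\})<\alpha$, $v_i(\{1,2n+1\})<\alpha$. $\delta$-ONI: ordered, normalized, $(3/4+\delta)$-irreducible. $B_k=\{k,2n-k+1\}$ ($k\in[n]$); $N^1=\{i:v_i(B_k)\le1\ \forall k\}$; $N^1_1=\{i\in N^1:v_i(2n+1)\ge\frac14-5\delta\}$. Algorithm $\mathtt{approxMMS1}(\mathcal{I},\delta)$: $\alpha=3/4+\delta$, bags $B_1,\dots,B_n$. Phase 1: while some unassigned agent $i$ and unassigned bag $B$ have $v_i(B)\ge\alpha$, assign such $B$ to an agent valuing it at least $\alpha$, choosing an agent of $N^1_1$ whenever one qualifies. Phase 2: process remaining bags one by one; for the current bag $B$, while no unassigned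 agent values it at least $\alpha$, add an arbitrary unused good with index $>2n$; then assign $B$ to an unassigned agent valuing it at least $\alpha$, preferring $N^1_1$. (If a good must be added but none is left, the algorithm stops.) *)

theory Defs
  imports Complex_Main
begin

text \<open>Agents are 1..n, real goods are 1..m; goods with index > m are dummy goods.
  A valuation profile is v :: nat => nat => real, v i g = value of good g for agent i.\<close>

definition bval :: "(nat \<Rightarrow> nat \<Rightarrow> real) \<Rightarrow> nat \<Rightarrow> nat set \<Rightarrow> real" where
  "bval v i S = (\<Sum>g\<in>S. v i g)"

definition agents :: "nat \<Rightarrow> nat set" where
  "agents n = {1..n}"

definition goods :: "nat \<Rightarrow> nat set" where
  "goods m = {1..m}"

definition is_partition :: "nat \<Rightarrow> nat \<Rightarrow> (nat \<Rightarrow> nat set) \<Rightarrow> bool" where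
  "is_partition n m P \<longleftrightarrow>
     (\<Union>j\<in>{1..n}. P j) = goods m \<and>
     (\<forall>j\<in>{1..n}. \<forall>j'\<in>{1..n}. j \<noteq> j' \<longrightarrow> P j \<inter> P j' = {})"

definition min_bundle :: "(nat \<Rightarrow> nat \<Rightarrow> real) \<Rightarrow> nat \<Rightarrow> nat \<Rightarrow> (nat \<Rightarrow> nat set) \<Rightarrow> real" where
  "min_bundle v n i P = Min ((\<lambda>j. bval v i (P j)) ` {1..n})"

definition MMS :: "(nat \<Rightarrow> nat \<Rightarrow> real) \<Rightarrow> nat \<Rightarrow> nat \<Rightarrow> nat \<Rightarrow> real" where
  "MMS v n m i = Max {min_bundle v n i P | P. is_partition n m P}"

definition additive_inst :: "(nat \<Rightarrow> nat \<Rightarrow> real) \<Rightarrow> nat \<Rightarrow> nat \<Rightarrow> bool" where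
  "additive_inst v n m \<longleftrightarrow> (\<forall>i\<in>agents n. \<forall>g. v i g \<ge> 0 \<and> (g > m \<longrightarrow> v i g = 0))"

definition ordered :: "(nat \<Rightarrow> nat \<Rightarrow> real) \<Rightarrow> nat \<Rightarrow> nat \<Rightarrow> bool" where
  "ordered v n m \<longleftrightarrow> (\<forall>i\<in>agents n. \<forall>g\<in>goods m. \<forall>g'\<in>goods m. g \<le> g' \<longrightarrow> v i g \<ge> v i g')"

definition normalized :: "(nat \<Rightarrow> nat \<Rightarrow> real) \<Rightarrow> nat \<Rightarrow> nat \<Rightarrow> bool" where
  "normalized v n m \<longleftrightarrow> (\<forall>i\<in>agents n. \<exists>P. is_partition n m P \<and>
      min_bundle v n i P = MMS v n m i \<and> (\<forall>j\<in>{1..n}. bval v i (P j) = 1))"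

definition irreducible :: "real \<Rightarrow> (nat \<Rightarrow> nat \<Rightarrow> real) \<Rightarrow> nat \<Rightarrow> bool" where
  "irreducible \<alpha> v n \<longleftrightarrow> (\<forall>i\<in>agents n.
      v i 1 < \<alpha> \<and>
      bval v i {2*n-1, 2*n, 2*n+1} < \<alpha> \<and>
      bval v i {3*n-2..3*n+1} < \<alpha> \<and>
      bval v i {1, 2*n+1} < \<alpha>)"

definition ONI :: "real \<Rightarrow> (nat \<Rightarrow> nat \<Rightarrow> real) \<Rightarrow> nat \<Rightarrow> nat \<Rightarrow> bool" where
  "ONI \<delta> v n m \<longleftrightarrow> additive_inst v n m \<and> ordered v n m \<and> normalized v n m \<and>
      irreducible (3/4 + \<delta>) v n"

definition initbag :: "nat \<Rightarrow> nat \<Rightarrow> nat set" where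
  "initbag n k = {k, 2*n - k + 1}"

definition N1 :: "(nat \<Rightarrow> nat \<Rightarrow> real) \<Rightarrow> nat \<Rightarrow> nat set" where
  "N1 v n = {i\<in>agents n. \<forall>k\<in>{1..n}. bval v i (initbag n k) \<le> 1}"

definition N11 :: "(nat \<Rightarrow> nat \<Rightarrow> real) \<Rightarrow> nat \<Rightarrow> real \<Rightarrow> nat set" where
  "N11 v n \<delta> = {i\<in>N1 v n. v i (2*n+1) \<ge> 1/4 - 5*\<delta>}"

text \<open>State of algorithm approxMMS1: phase (1 or 2), assignment of bags to agents,
  current contents of each bag (indexed 1..n), indices of unassigned bags, the bag currently
  processed in phase 2, and the pool of unused goods with index > 2n.\<close>

record st =
  ph :: nat
  asg :: "nat \<Rightarrow> nat set option"
  bag :: "nat \<Rightarrow> nat set"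
  rem :: "nat set"
  cur :: "nat option"
  pool :: "nat set"

definition init_st :: "nat \<Rightarrow> nat \<Rightarrow> st" where
  "init_st n m = \<lparr>ph = 1, asg = (\<lambda>_. None), bag = initbag n, rem = {1..n}, cur = None,
                 pool = {2*n+1..m}\<rparr>"

inductive alg_step :: "(nat \<Rightarrow> nat \<Rightarrow> real) \<Rightarrow> nat \<Rightarrow> real \<Rightarrow> st \<Rightarrow> st \<Rightarrow> bool"
  for v n \<delta> where
  p1_assign: "\<lbrakk> ph s = 1; i \<in> agents n; asg s i = None; k \<in> rem s;
      bval v i (bag s k) \<ge> 3/4 + \<delta>;
      (\<exists>j\<in>N11 v n \<delta>. asg s j = None \<and> bval v j (bag s k) \<ge> 3/4 + \<delta>) \<longrightarrow> i \<in> N11 v n \<delta> \<rbrakk>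
    \<Longrightarrow> alg_step v n \<delta> s (s\<lparr>asg := (asg s)(i := Some (bag s k)), rem := rem s - {k}\<rparr>)"
| p1_end: "\<lbrakk> ph s = 1;
      \<not> (\<exists>i\<in>agents n. \<exists>k\<in>rem s. asg s i = None \<and> bval v i (bag s k) \<ge> 3/4 + \<delta>) \<rbrakk>
    \<Longrightarrow> alg_step v n \<delta> s (s\<lparr>ph := 2\<rparr>)"
| p2_select: "\<lbrakk> ph s = 2; cur s = None; k \<in> rem s \<rbrakk>
    \<Longrightarrow> alg_step v n \<delta> s (s\<lparr>cur := Some k\<rparr>)"
| p2_add: "\<lbrakk> ph s = 2; cur s = Some k;
      \<not> (\<exists>i\<in>agents n. asg s i = None \<and> bval v i (bag s k) \<ge> 3/4 + \<delta>); g \<in> pool s \<rbrakk>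
    \<Longrightarrow> alg_step v n \<delta> s (s\<lparr>bag := (bag s)(k := bag s k \<union> {g}), pool := pool s - {g}\<rparr>)"
| p2_assign: "\<lbrakk> ph s = 2; cur s = Some k; i \<in> agents n; asg s i = None;
      bval v i (bag s k) \<ge> 3/4 + \<delta>;
      (\<exists>j\<in>N11 v n \<delta>. asg s j = None \<and> bval v j (bag s k) \<ge> 3/4 + \<delta>) \<longrightarrow> i \<in> N11 v n \<delta> \<rbrakk>
    \<Longrightarrow> alg_step v n \<delta> s (s\<lparr>asg := (asg s)(i := Some (bag s k)), rem := rem s - {k},
                              cur := None\<rparr>)"

definition final_state :: "(nat \<Rightarrow> nat \<Rightarrow> real) \<Rightarrow> nat \<Rightarrow> nat \<Rightarrow> real \<Rightarrow> st \<Rightarrow> bool" where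
  "final_state v n m \<delta> s \<longleftrightarrow>
     (alg_step v n \<delta>)\<^sup>*\<^sup>* (init_st n m) s \<and> \<not> (\<exists>s'. alg_step v n \<delta> s s')"

end

theory Submission
  imports Defs
begin

(* Fix an agent i of N11 and suppose it is never served. While i waits, every bag is worth at
   most max 1 (3/4 + \<delta> + v i (2n+1)) to i: the initial bags are worth at most 1 since
   i \<in> N1, and a bag only receives a good (worth at most v i (2n+1), goods being ordered)
   while i values it below 3/4 + \<delta>. Moreover, by the preference rule, every bag that i
   values at least 3/4 + \<delta> is handed to an agent of N11. In a final state the pool is empty
   and the current bag is worth less than 3/4 + \<delta> to i, so among the n bags, of total value
   n to i, at most |N11| reach the threshold and at least one stays below it. As
   3 v i (2n+1) < 3/4 + \<delta> by irreducibility, the bound on |N11| makes this total less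
   than n. Finally, served agents get bags worth at least 3/4 + \<delta>, and MMS_i = 1 by
   normalization. *)

lemma N11_subset_agents: "N11 v n \<delta> \<subseteq> agents n"
  by (auto simp: N11_def N1_def)

lemma finite_N11: "finite (N11 v n \<delta>)"
  using N11_subset_agents by (rule finite_subset) (simp add: agents_def)

lemma bval_UN_disjoint:
  assumes "finite I" "\<forall>k\<in>I. finite (B k)" "\<forall>k\<in>I. \<forall>k'\<in>I. k \<noteq> k' \<longrightarrow> B k \<inter> B k' = {}"
  shows "bval v i (\<Union>k\<in>I. B k) = (\<Sum>k\<in>I. bval v i (B k))"
  unfolding bval_def using assms by (intro sum.UNION_disjoint) auto

lemma normalized_bval_goods:
  assumes "normalized v n m" "i \<in> agents n"
  shows "bval v i (goods m) = real n"
proof -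
  obtain P where P: "is_partition n m P" "\<forall>j\<in>{1..n}. bval v i (P j) = 1"
    using assms unfolding normalized_def by blast
  then have goods: "goods m = (\<Union>j\<in>{1..n}. P j)" by (simp add: is_partition_def)
  then have "\<forall>j\<in>{1..n}. P j \<subseteq> goods m" by blast
  then have "\<forall>j\<in>{1..n}. finite (P j)" by (metis finite_subset finite_atLeastAtMost goods_def)
  then have "bval v i (goods m) = (\<Sum>j\<in>{1..n}. bval v i (P j))"
    unfolding goods using P(1) by (intro bval_UN_disjoint) (auto simp: is_partition_def)
  then show ?thesis using P(2) by simp
qed

lemma normalized_MMS_eq_1:
  assumes "normalized v n m" "i \<in> agents n"
  shows "MMS v n m i = 1"
proof -
  obtain P where P: "min_bundle v n i P = MMS v n m i" "\<forall>j\<in>{1..n}. bval v i (P j) = 1"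
    using assms unfolding normalized_def by blast
  have "{1..n} \<noteq> {}" using assms(2) by (auto simp: agents_def)
  then have "(\<lambda>j. bval v i (P j)) ` {1..n} = {1}" using P(2) by auto
  then show ?thesis using P(1) by (simp add: min_bundle_def)
qed

lemma additive_bval_atLeastAtMost:
  assumes "additive_inst v n m" "i \<in> agents n" "m \<le> k"
  shows "bval v i {1..k} = bval v i (goods m)"
  unfolding bval_def
  using assms by (intro sum.mono_neutral_right) (auto simp: additive_inst_def goods_def)

lemma ordered_additive_antimono:
  assumes "ordered v n m" "additive_inst v n m" "i \<in> agents n" "1 \<le> g" "g \<le> g'"
  shows "v i g' \<le> v i g"
proof (cases "g' \<le> m")
  case True
  then show ?thesis using assms by (auto simp: ordered_def goods_def)
next
  case False
  then show ?thesis using assms(2,3) by (auto simp: additive_inst_def)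
qed

lemma ONI_triple_good_2n_plus_1_lt:
  assumes "ONI \<delta> v n m" "i \<in> agents n"
  shows "3 * v i (2*n+1) < 3/4 + \<delta>"
proof -
  have "1 \<le> n" using assms(2) by (simp add: agents_def)
  then have "2*n-1 \<notin> {2*n, 2*n+1}" by auto
  then have "bval v i {2*n-1, 2*n, 2*n+1} = v i (2*n-1) + v i (2*n) + v i (2*n+1)"
    by (simp add: bval_def)
  moreover have "bval v i {2*n-1, 2*n, 2*n+1} < 3/4 + \<delta>"
    using assms by (auto simp: ONI_def irreducible_def)
  moreover have "v i (2*n+1) \<le> v i (2*n-1)" "v i (2*n+1) \<le> v i (2*n)"
    using assms \<open>1 \<le> n\<close> by (auto simp: ONI_def intro: ordered_additive_antimono)
  ultimately show ?thesis by linarith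
qed

lemma capped_total_le:
  fixes h n w \<delta> :: real
  assumes "0 \<le> h" "h \<le> n" "\<delta> \<le> 1/4" "3 * w < 3/4 + \<delta>"
    "h * (1/4 + \<delta>/3) \<le> n * (1/4 - \<delta>)"
  shows "h * max 1 (3/4 + \<delta> + w) + (n - h) * (3/4 + \<delta>) \<le> n"
proof (cases "3/4 + \<delta> + w \<le> 1")
  case True
  have "h * max 1 (3/4 + \<delta> + w) + (n - h) * (3/4 + \<delta>) \<le> h * 1 + (n - h) * 1"
    using True assms(1-3) by (intro add_mono mult_left_mono) auto
  then show ?thesis by simp
next
  case False
  then have "h * max 1 (3/4 + \<delta> + w) + (n - h) * (3/4 + \<delta>) = n * (3/4 + \<delta>) + h * w"
    by (simp add: field_simps)
  also have "\<dots> \<le> n * (3/4 + \<delta>) + h * (1/4 + \<delta>/3)"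
    using assms(1,4) by (intro add_left_mono mult_left_mono) auto
  also have "\<dots> \<le> n"
    using assms(5) by (simp add: algebra_simps)
  finally show ?thesis .
qed

lemma le_divide_bound_imp_mult_le:
  fixes h K n \<delta> :: real
  assumes "h \<le> K" "1 \<le> K" "0 \<le> n" "K \<le> n * (1/4 - \<delta>) / (1/4 + \<delta>/3)"
  shows "h * (1/4 + \<delta>/3) \<le> n * (1/4 - \<delta>)"
proof -
  have "0 < 1/4 + \<delta>/3"
  proof (rule ccontr)
    assume "\<not> 0 < 1/4 + \<delta>/3"
    then have "n * (1/4 - \<delta>) / (1/4 + \<delta>/3) \<le> 0"
      using assms(3) by (intro divide_nonneg_nonpos) auto
    then show False using assms(2,4) by linarith
  qed
  moreover have "h \<le> n * (1/4 - \<delta>) / (1/4 + \<delta>/3)" using assms(1,4) by linarith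
  ultimately show ?thesis by (simp add: pos_le_divide_eq)
qed

lemma sum_lt_threshold_split:
  fixes f :: "'a \<Rightarrow> real"
  assumes "finite A" "\<forall>x\<in>A. f x \<le> c" "a \<in> A" "f a < t"
  defines "H \<equiv> {x\<in>A. t \<le> f x}"
  shows "sum f A < real (card H) * c + (real (card A) - real (card H)) * t"
proof -
  have HA: "H \<subseteq> A" by (auto simp: H_def)
  have "sum f H \<le> real (card H) * c"
    using assms(2) HA by (intro sum_bounded_above) auto
  moreover have "sum f (A - H) < (\<Sum>x\<in>A - H. t)"
    using assms by (intro sum_strict_mono_ex1) (auto simp: H_def)
  moreover have "real (card (A - H)) = real (card A) - real (card H)"
    using HA assms(1) by (simp add: card_Diff_subset finite_subset card_mono of_nat_diff)
  moreover have "sum f A = sum f (A - H) + sum f H"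
    using HA assms(1) by (intro sum.subset_diff)
  ultimately show ?thesis by (simp add: algebra_simps)
qed

(* The initial bags may contain dummy goods m < g \<le> 2n, hence the range 1..max (2n) m. *)
definition wf_state :: "nat \<Rightarrow> nat \<Rightarrow> st \<Rightarrow> bool" where
  "wf_state n m s \<longleftrightarrow>
     (ph s = 1 \<or> ph s = 2) \<and> (ph s = 1 \<longrightarrow> cur s = None) \<and>
     (\<forall>k. cur s = Some k \<longrightarrow> k \<in> rem s) \<and> rem s \<subseteq> {1..n} \<and> pool s \<subseteq> {2*n+1..m} \<and>
     (\<forall>k\<in>{1..n}. \<forall>k'\<in>{1..n}. k \<noteq> k' \<longrightarrow> bag s k \<inter> bag s k' = {}) \<and>
     (\<forall>k\<in>{1..n}. bag s k \<inter> pool s = {}) \<and>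
     (\<Union>k\<in>{1..n}. bag s k) \<union> pool s = {1..max (2*n) m} \<and>
     card {j\<in>agents n. asg s j = None} = card (rem s)"

lemma wf_state_finite_bag:
  assumes "wf_state n m s" "k \<in> {1..n}"
  shows "finite (bag s k)"
proof -
  have "bag s k \<subseteq> {1..max (2*n) m}" using assms unfolding wf_state_def by blast
  then show ?thesis by (rule finite_subset) simp
qed

lemma UN_initbag: "(\<Union>k\<in>{1..n}. initbag n k) = {1..2*n}"
proof
  show "{1..2*n} \<subseteq> (\<Union>k\<in>{1..n}. initbag n k)"
  proof
    fix g assume g: "g \<in> {1..2*n}"
    show "g \<in> (\<Union>k\<in>{1..n}. initbag n k)"
    proof (cases "g \<le> n")
      case True
      then show ?thesis using g by (auto simp: initbag_def)
    next
      case False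
      then have "g \<in> initbag n (2*n+1-g)" "2*n+1-g \<in> {1..n}" using g by (auto simp: initbag_def)
      then show ?thesis by blast
    qed
  qed
qed (auto simp: initbag_def)

lemma wf_state_init: "wf_state n m (init_st n m)"
proof -
  have "(\<Union>k\<in>{1..n}. initbag n k) \<union> {2*n+1..m} = {1..max (2*n) m}"
    unfolding UN_initbag by auto
  moreover have "card (agents n) = n" by (simp add: agents_def)
  ultimately show ?thesis
    unfolding wf_state_def init_st_def st.simps by (auto simp: initbag_def)
qed

lemma card_unassigned_update:
  assumes "a \<in> agents n" "g a = None"
  shows "card {j\<in>agents n. (g(a := Some B)) j = None} = card {j\<in>agents n. g j = None} - 1"
proof -
  have "{j\<in>agents n. (g(a := Some B)) j = None} = {j\<in>agents n. g j = None} - {a}" by auto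
  then show ?thesis using assms by (simp add: agents_def)
qed

lemma move_good_to_bag:
  fixes B :: "'k \<Rightarrow> 'a set"
  assumes "k \<in> K" "g \<in> P"
    and "\<forall>k\<in>K. \<forall>k'\<in>K. k \<noteq> k' \<longrightarrow> B k \<inter> B k' = {}" "\<forall>k\<in>K. B k \<inter> P = {}"
  defines "B' \<equiv> B(k := B k \<union> {g})"
  shows "\<forall>k\<in>K. \<forall>k'\<in>K. k \<noteq> k' \<longrightarrow> B' k \<inter> B' k' = {}"
    and "\<forall>k\<in>K. B' k \<inter> (P - {g}) = {}"
    and "(\<Union>k\<in>K. B' k) \<union> (P - {g}) = (\<Union>k\<in>K. B k) \<union> P"
  using assms by auto

lemma wf_state_step:
  assumes "alg_step v n \<delta> s s'" "wf_state n m s"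
  shows "wf_state n m s'"
  using assms(1)
proof cases
  case (p1_assign i k)
  have "finite (rem s)" using assms(2) by (auto simp: wf_state_def intro: finite_subset)
  then have "card {j\<in>agents n. ((asg s)(i := Some (bag s k))) j = None} = card (rem s - {k})"
    using p1_assign assms(2) card_unassigned_update[of i n "asg s"] by (simp add: wf_state_def)
  then show ?thesis using p1_assign assms(2) unfolding wf_state_def by auto
next
  case (p2_add k g)
  have "k \<in> {1..n}" "g \<in> pool s"
    "\<forall>k\<in>{1..n}. \<forall>k'\<in>{1..n}. k \<noteq> k' \<longrightarrow> bag s k \<inter> bag s k' = {}"
    "\<forall>k\<in>{1..n}. bag s k \<inter> pool s = {}"
    using p2_add assms(2) unfolding wf_state_def by auto
  note moved = move_good_to_bag[OF this]
  have "(\<Union>k'\<in>{1..n}. ((bag s)(k := bag s k \<union> {g})) k') \<union> (pool s - {g}) = {1..max (2*n) m}"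
    using moved(3) assms(2) unfolding wf_state_def by (elim conjE) (rule trans)
  moreover have "pool s - {g} \<subseteq> {2*n+1..m}" using assms(2) by (auto simp: wf_state_def)
  ultimately show ?thesis using moved(1,2) assms(2)
    unfolding p2_add(1) wf_state_def by simp
next
  case (p2_assign k i)
  have "finite (rem s)" "k \<in> rem s"
    using p2_assign assms(2) by (auto simp: wf_state_def intro: finite_subset)
  then have "card {j\<in>agents n. ((asg s)(i := Some (bag s k))) j = None} = card (rem s - {k})"
    using p2_assign assms(2) card_unassigned_update[of i n "asg s"] by (simp add: wf_state_def)
  then show ?thesis using p2_assign assms(2) unfolding wf_state_def by auto
qed (use assms(2) in \<open>auto simp: wf_state_def\<close>)

lemma reachable_wf_state:
  assumes "(alg_step v n \<delta>)\<^sup>*\<^sup>* (init_st n m) s"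
  shows "wf_state n m s"
  using assms by induction (auto intro: wf_state_init wf_state_step)

lemma reachable_assigned_value:
  assumes "(alg_step v n \<delta>)\<^sup>*\<^sup>* (init_st n m) s" "asg s j = Some B"
  shows "3/4 + \<delta> \<le> bval v j B"
  using assms
  by (induction arbitrary: B) (auto simp: init_st_def elim!: alg_step.cases split: if_splits)

lemma unassigned_before_step:
  assumes "alg_step v n \<delta> s s'" "asg s' i = None"
  shows "asg s i = None"
  using assms by cases (auto split: if_splits)

definition pending_inv :: "(nat \<Rightarrow> nat \<Rightarrow> real) \<Rightarrow> nat \<Rightarrow> real \<Rightarrow> nat \<Rightarrow> st \<Rightarrow> bool" where
  "pending_inv v n \<delta> i s \<longleftrightarrow>
     (\<forall>k\<in>{1..n}. bval v i (bag s k) \<le> max 1 (3/4 + \<delta> + v i (2*n+1))) \<and>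
     (ph s = 2 \<longrightarrow> (\<forall>k\<in>rem s. cur s \<noteq> Some k \<longrightarrow> bval v i (bag s k) < 3/4 + \<delta>)) \<and>
     card {k\<in>{1..n} - rem s. 3/4 + \<delta> \<le> bval v i (bag s k)} \<le> card {j\<in>N11 v n \<delta>. asg s j \<noteq> None}"

lemma pending_inv_init:
  assumes "i \<in> N1 v n"
  shows "pending_inv v n \<delta> i (init_st n m)"
  using assms by (auto simp: pending_inv_def init_st_def N1_def)

lemma card_served_assign:
  fixes g :: "'a \<Rightarrow> 'b option"
  assumes "finite K" "finite N" "g a = None" "k \<in> R"
    and "card {k\<in>K - R. P k} \<le> card {j\<in>N. g j \<noteq> None}" "P k \<longrightarrow> a \<in> N"
  shows "card {k'\<in>K - (R - {k}). P k'} \<le> card {j\<in>N. (g(a := Some B)) j \<noteq> None}"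
proof (cases "P k \<and> k \<in> K")
  case True
  then have "{k'\<in>K - (R - {k}). P k'} = insert k {k\<in>K - R. P k}"
    "{j\<in>N. (g(a := Some B)) j \<noteq> None} = insert a {j\<in>N. g j \<noteq> None}"
    using assms(4,6) by auto
  then show ?thesis using assms by simp
next
  case False
  then have "{k'\<in>K - (R - {k}). P k'} = {k\<in>K - R. P k}" using assms(4) by auto
  moreover have "card {j\<in>N. g j \<noteq> None} \<le> card {j\<in>N. (g(a := Some B)) j \<noteq> None}"
    using assms(2,3) by (intro card_mono) auto
  ultimately show ?thesis using assms(5) by simp
qed

lemma pending_inv_step:
  assumes step: "alg_step v n \<delta> s s'" and wf: "wf_state n m s" and inv: "pending_inv v n \<delta> i s"
    and i: "i \<in> N11 v n \<delta>" "asg s' i = None"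
    and "ordered v n m" "additive_inst v n m"
  shows "pending_inv v n \<delta> i s'"
proof -
  have unassigned: "asg s i = None" using unassigned_before_step[OF step i(2)] .
  have iA: "i \<in> agents n" using i(1) N11_subset_agents by blast
  from step show ?thesis
  proof cases
    case (p1_assign a k)
    have "3/4 + \<delta> \<le> bval v i (bag s k) \<longrightarrow> a \<in> N11 v n \<delta>"
      using p1_assign i(1) unassigned by blast
    then have "card {k'\<in>{1..n} - (rem s - {k}). 3/4 + \<delta> \<le> bval v i (bag s k')}
        \<le> card {j\<in>N11 v n \<delta>. ((asg s)(a := Some (bag s k))) j \<noteq> None}"
      using inv p1_assign by (intro card_served_assign finite_N11) (auto simp: pending_inv_def)
    then show ?thesis using inv p1_assign unfolding pending_inv_def by simp
  next
    case p1_end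
    then have "\<forall>k\<in>rem s. bval v i (bag s k) < 3/4 + \<delta>" using iA unassigned by force
    then show ?thesis using p1_end inv wf unfolding pending_inv_def wf_state_def by auto
  next
    case (p2_select k)
    then show ?thesis using inv unfolding pending_inv_def by auto
  next
    case (p2_add k g)
    have k: "k \<in> rem s" "k \<in> {1..n}" using p2_add wf unfolding wf_state_def by auto
    have g: "g \<notin> bag s k" "2*n+1 \<le> g" using p2_add k wf unfolding wf_state_def by auto
    have "bval v i (bag s k \<union> {g}) = bval v i (bag s k) + v i g"
      using g wf_state_finite_bag[OF wf k(2)] by (simp add: bval_def)
    moreover have "bval v i (bag s k) < 3/4 + \<delta>" using p2_add iA unassigned by auto
    moreover have "v i g \<le> v i (2*n+1)"
      using g assms(6,7) iA by (intro ordered_additive_antimono) auto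
    ultimately have "bval v i (bag s k \<union> {g}) \<le> max 1 (3/4 + \<delta> + v i (2*n+1))" by linarith
    moreover have "{k'\<in>{1..n} - rem s. 3/4 + \<delta> \<le> bval v i (((bag s)(k := bag s k \<union> {g})) k')}
        = {k'\<in>{1..n} - rem s. 3/4 + \<delta> \<le> bval v i (bag s k')}" using k by auto
    ultimately show ?thesis using inv p2_add unfolding pending_inv_def by auto
  next
    case (p2_assign k a)
    have "k \<in> rem s" using p2_assign wf unfolding wf_state_def by auto
    moreover have "3/4 + \<delta> \<le> bval v i (bag s k) \<longrightarrow> a \<in> N11 v n \<delta>"
      using p2_assign i(1) unassigned by blast
    ultimately have "card {k'\<in>{1..n} - (rem s - {k}). 3/4 + \<delta> \<le> bval v i (bag s k')}
        \<le> card {j\<in>N11 v n \<delta>. ((asg s)(a := Some (bag s k))) j \<noteq> None}"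
      using inv p2_assign by (intro card_served_assign finite_N11) (auto simp: pending_inv_def)
    then show ?thesis using inv p2_assign unfolding pending_inv_def by simp
  qed
qed

lemma reachable_pending_inv:
  assumes "(alg_step v n \<delta>)\<^sup>*\<^sup>* (init_st n m) s" "i \<in> N11 v n \<delta>" "asg s i = None"
    and "ordered v n m" "additive_inst v n m"
  shows "pending_inv v n \<delta> i s"
  using assms(1,3)
proof (induction rule: rtranclp_induct)
  case base
  then show ?case using assms(2) by (intro pending_inv_init) (simp add: N11_def)
next
  case (step s s')
  have "asg s i = None" using unassigned_before_step[OF step.hyps(2) step.prems] .
  then have "pending_inv v n \<delta> i s" by (rule step.IH)
  with step assms(2,4,5) show ?case by (blast intro: pending_inv_step reachable_wf_state)
qed

lemma preferred_agent_exists: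
  assumes "j \<in> agents n" "asg s j = None" "3/4 + \<delta> \<le> bval v j B"
  obtains i where "i \<in> agents n" "asg s i = None" "3/4 + \<delta> \<le> bval v i B"
    "(\<exists>j\<in>N11 v n \<delta>. asg s j = None \<and> 3/4 + \<delta> \<le> bval v j B) \<longrightarrow> i \<in> N11 v n \<delta>"
  using assms N11_subset_agents by blast

lemma final_unassigned_shape:
  assumes wf: "wf_state n m s" and final: "\<nexists>s'. alg_step v n \<delta> s s'"
    and i: "i \<in> agents n" "asg s i = None"
  obtains k where "ph s = 2" "cur s = Some k" "pool s = {}" "bval v i (bag s k) < 3/4 + \<delta>"
proof -
  have ph2: "ph s = 2"
  proof (rule ccontr)
    assume "ph s \<noteq> 2"
    then have ph1: "ph s = 1" using wf by (simp add: wf_state_def)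
    show False
    proof (cases "\<exists>j\<in>agents n. \<exists>k\<in>rem s. asg s j = None \<and> 3/4 + \<delta> \<le> bval v j (bag s k)")
      case True
      then obtain j k where k: "k \<in> rem s" and "j \<in> agents n" "asg s j = None"
        "3/4 + \<delta> \<le> bval v j (bag s k)"
        by blast
      then obtain a where "a \<in> agents n" "asg s a = None" "3/4 + \<delta> \<le> bval v a (bag s k)"
        "(\<exists>j\<in>N11 v n \<delta>. asg s j = None \<and> 3/4 + \<delta> \<le> bval v j (bag s k)) \<longrightarrow> a \<in> N11 v n \<delta>"
        by (blast elim: preferred_agent_exists)
      with k ph1 have "alg_step v n \<delta> s
          (s\<lparr>asg := (asg s)(a := Some (bag s k)), rem := rem s - {k}\<rparr>)"
        by (intro alg_step.p1_assign)
      with final show False by blast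
    next
      case False
      with ph1 have "alg_step v n \<delta> s (s\<lparr>ph := 2\<rparr>)" by (intro alg_step.p1_end)
      with final show False by blast
    qed
  qed
  obtain k where k: "cur s = Some k"
  proof (cases "cur s")
    case None
    have "card {j\<in>agents n. asg s j = None} \<noteq> 0" using i by (auto simp: agents_def)
    then have "rem s \<noteq> {}" using wf by (auto simp: wf_state_def)
    then obtain k where "k \<in> rem s" by blast
    with ph2 None have "alg_step v n \<delta> s (s\<lparr>cur := Some k\<rparr>)" by (intro alg_step.p2_select)
    with final show ?thesis by blast
  qed
  have no_taker: "\<not> (\<exists>j\<in>agents n. asg s j = None \<and> 3/4 + \<delta> \<le> bval v j (bag s k))"
  proof
    assume "\<exists>j\<in>agents n. asg s j = None \<and> 3/4 + \<delta> \<le> bval v j (bag s k)"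
    then obtain a where "a \<in> agents n" "asg s a = None" "3/4 + \<delta> \<le> bval v a (bag s k)"
      "(\<exists>j\<in>N11 v n \<delta>. asg s j = None \<and> 3/4 + \<delta> \<le> bval v j (bag s k)) \<longrightarrow> a \<in> N11 v n \<delta>"
      by (blast elim: preferred_agent_exists)
    with ph2 k have "alg_step v n \<delta> s
        (s\<lparr>asg := (asg s)(a := Some (bag s k)), rem := rem s - {k}, cur := None\<rparr>)"
      by (intro alg_step.p2_assign)
    with final show False by blast
  qed
  have "pool s = {}"
  proof (rule ccontr)
    assume "pool s \<noteq> {}"
    then obtain g where "g \<in> pool s" by blast
    with ph2 k no_taker have "alg_step v n \<delta> s
        (s\<lparr>bag := (bag s)(k := bag s k \<union> {g}), pool := pool s - {g}\<rparr>)"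
      by (intro alg_step.p2_add)
    with final show False by blast
  qed
  moreover have "bval v i (bag s k) < 3/4 + \<delta>" using no_taker i by auto
  ultimately show thesis using that ph2 k by blast
qed

lemma total_bag_value:
  assumes "wf_state n m s" "pool s = {}" "additive_inst v n m" "normalized v n m" "i \<in> agents n"
  shows "(\<Sum>k\<in>{1..n}. bval v i (bag s k)) = real n"
proof -
  have "(\<Union>k\<in>{1..n}. bag s k) = {1..max (2*n) m}" using assms(1,2) by (simp add: wf_state_def)
  then have "(\<Sum>k\<in>{1..n}. bval v i (bag s k)) = bval v i {1..max (2*n) m}"
    using assms(1) wf_state_finite_bag[OF assms(1)] bval_UN_disjoint[of "{1..n}" "bag s" v i]
    by (simp add: wf_state_def)
  also have "\<dots> = real n"
    using additive_bval_atLeastAtMost[OF assms(3,5) max.cobounded2]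
      normalized_bval_goods[OF assms(4,5)] by simp
  finally show ?thesis .
qed

lemma high_bags_le_card_N11:
  assumes "wf_state n m s" "pending_inv v n \<delta> i s" "ph s = 2" "cur s = Some k"
    "bval v i (bag s k) < 3/4 + \<delta>"
  shows "card {k\<in>{1..n}. 3/4 + \<delta> \<le> bval v i (bag s k)} \<le> card (N11 v n \<delta>)"
proof -
  have "{k\<in>{1..n}. 3/4 + \<delta> \<le> bval v i (bag s k)}
      \<subseteq> {k\<in>{1..n} - rem s. 3/4 + \<delta> \<le> bval v i (bag s k)}"
    using assms(2-5) by (force simp: pending_inv_def)
  then have "card {k\<in>{1..n}. 3/4 + \<delta> \<le> bval v i (bag s k)}
      \<le> card {k\<in>{1..n} - rem s. 3/4 + \<delta> \<le> bval v i (bag s k)}"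
    by (intro card_mono) auto
  also have "\<dots> \<le> card {j\<in>N11 v n \<delta>. asg s j \<noteq> None}"
    using assms(2) by (simp add: pending_inv_def)
  also have "\<dots> \<le> card (N11 v n \<delta>)" by (intro card_mono finite_N11) auto
  finally show ?thesis .
qed

lemma stuck_pending_agent_impossible:
  assumes "\<delta> \<le> 1/4" "ONI \<delta> v n m"
    and bound: "real (card (N11 v n \<delta>)) \<le> real n * (1/4 - \<delta>) / (1/4 + \<delta>/3)"
    and i: "i \<in> N11 v n \<delta>" and wf: "wf_state n m s" and inv: "pending_inv v n \<delta> i s"
    and k: "ph s = 2" "cur s = Some k" "pool s = {}" "bval v i (bag s k) < 3/4 + \<delta>"
  shows False
proof -
  have iA: "i \<in> agents n" using i N11_subset_agents by blast
  define c where "c = max 1 (3/4 + \<delta> + v i (2*n+1))"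
  define h where "h = card {k\<in>{1..n}. 3/4 + \<delta> \<le> bval v i (bag s k)}"
  have "k \<in> {1..n}" using wf k(2) by (auto simp: wf_state_def)
  moreover have "\<forall>k\<in>{1..n}. bval v i (bag s k) \<le> c" using inv by (simp add: pending_inv_def c_def)
  ultimately have "real n < real h * c + (real n - real h) * (3/4 + \<delta>)"
    using sum_lt_threshold_split[of "{1..n}" "\<lambda>k. bval v i (bag s k)" c k "3/4 + \<delta>"] k(4)
      total_bag_value[OF wf k(3) _ _ iA] assms(2) by (simp add: h_def ONI_def)
  moreover have "real h * c + (real n - real h) * (3/4 + \<delta>) \<le> real n"
  proof -
    have "h \<le> card {1..n}" unfolding h_def by (intro card_mono) auto
    moreover have "h \<le> card (N11 v n \<delta>)"
      unfolding h_def by (rule high_bags_le_card_N11[OF wf inv k(1,2,4)])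
    moreover have "1 \<le> card (N11 v n \<delta>)" using i finite_N11 by (auto simp: Suc_le_eq card_gt_0_iff)
    ultimately show ?thesis unfolding c_def
      using assms(1) ONI_triple_good_2n_plus_1_lt[OF assms(2) iA]
        le_divide_bound_imp_mult_le[of "real h" "real (card (N11 v n \<delta>))" "real n" \<delta>] bound
      by (intro capped_total_le) auto
  qed
  ultimately show False by linarith
qed

lemma N11_agent_assigned:
  assumes "\<delta> \<le> 1/4" "ONI \<delta> v n m"
    and "real (card (N11 v n \<delta>)) \<le> real n * (1/4 - \<delta>) / (1/4 + \<delta>/3)"
    and "final_state v n m \<delta> s" "i \<in> N11 v n \<delta>"
  shows "asg s i \<noteq> None"
proof
  assume unassigned: "asg s i = None"
  have reach: "(alg_step v n \<delta>)\<^sup>*\<^sup>* (init_st n m) s" and stuck: "\<nexists>s'. alg_step v n \<delta> s s'"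
    using assms(4) by (auto simp: final_state_def)
  have wf: "wf_state n m s" using reach by (rule reachable_wf_state)
  have inv: "pending_inv v n \<delta> i s"
    using assms(2) by (intro reachable_pending_inv[OF reach assms(5) unassigned]) (auto simp: ONI_def)
  have "i \<in> agents n" using assms(5) N11_subset_agents by blast
  with final_unassigned_shape[OF wf stuck _ unassigned] show False
    using stuck_pending_agent_impossible[OF assms(1-3,5) wf inv] by metis
qed

theorem lemma22:
  fixes v :: "nat \<Rightarrow> nat \<Rightarrow> real" and n m :: nat and \<delta> :: real and s :: st
  assumes "\<delta> \<le> 1/4"
    and "ONI \<delta> v n m"
    and "real (card (N11 v n \<delta>)) \<le> real n * (1/4 - \<delta>) / (1/4 + \<delta>/3)"
    and "final_state v n m \<delta> s"
  shows "\<forall>i\<in>N11 v n \<delta>. \<exists>B. asg s i = Some B \<and> bval v i B \<ge> (3/4 + \<delta>) * MMS v n m i"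
proof
  fix i assume i: "i \<in> N11 v n \<delta>"
  obtain B where B: "asg s i = Some B" using N11_agent_assigned[OF assms i] by blast
  have "(alg_step v n \<delta>)\<^sup>*\<^sup>* (init_st n m) s" using assms(4) by (simp add: final_state_def)
  then have "3/4 + \<delta> \<le> bval v i B" using B by (rule reachable_assigned_value)
  moreover have "MMS v n m i = 1"
    using assms(2) i N11_subset_agents by (intro normalized_MMS_eq_1) (auto simp: ONI_def)
  ultimately show "\<exists>B. asg s i = Some B \<and> bval v i B \<ge> (3/4 + \<delta>) * MMS v n m i"
    using B by simp
qed

end
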